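(* Let $U,V$ be finite sets of positive integers with $k_1$ and $k_2$ elements respectively, $k=k_1+k_2$, and let $N,\beta$ be real numbers. For each $u\in U$ let $R_u$ be a nonzero polynomial of degree $u$ with leading coefficient $r_u$, and for each $v\in V$ let $R_v'$ be a nonzero polynomial of degree $v$ with leading coefficient $r'_v$ (the polynomials attached to $U$ and to $V$ are different polynomials even if $U\cap V\neq\emptyset$). Define $$P(x)=\frac{\det M(x)}{\prod_{i=1}^{k_2}s^{N-k+1}_{k_2-i+1}(x)\,s^{N+\beta-i+2}_{i-1}(x)},$$ where $M(x)$ is the $k\times k$ matrix whose columns are indexed by $j=1,\dots,k$, whose first $k_1$ rows are, for $u\in U$ in increasing order, $\big(R_u(x+j-1)\big)_{j=1}^k$, and whose last $k_2$ rows are, for $v\in V$ in increasing order, $\big(s^{N-k+1}_{k-j+1}(x)\,s^{N+\beta+1}_{j-1}(x+j-1)\,R'_v(x+j-1)\big)_{j=1}^k$. If $\beta+u-v\neq 0$ for all $u\in U$, $v\in V$, then $P$ is a polynomial of degree $\sum_{u\in U}u+\sum_{v\in V}v-\binom{k_1}{2}-\binom{k_2}{2}$ with leading coefficient $$V_UV_V\prod_{u\in U}r_u\prod_{v\in V}r'_v\prod_{u\in U,v\in V}(\beta+u-v).$$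
   Context: $(a)_0=1$, $(a)_j=a(a+1)\cdots(a+j-1)$ is the Pochhammer symbol, and for $u\in\mathbb C$, $s^u_j(x)=(u-x)_j$, a polynomial of degree $j$ in $x$. For a finite set $F=\{f_1<\dots<f_m\}$, $V_F=\prod_{1\le i<j\le m}(f_j-f_i)$ is its Vandermonde product (empty product $=1$). *)

theory Defs
  imports "HOL-Computational_Algebra.Polynomial" "Jordan_Normal_Form.Determinant"
begin

definition s_poch :: "real \<Rightarrow> nat \<Rightarrow> real \<Rightarrow> real" where
  "s_poch u j x = pochhammer (u - x) j"

definition vandermonde :: "nat set \<Rightarrow> real" where
  "vandermonde F = (\<Prod>(a,b) \<in> {(a,b). a \<in> F \<and> b \<in> F \<and> a < b}. real b - real a)"

text \<open>The k x k matrix M(x), 0-based indices: row i, column j corresponds to j+1 in the paper.\<close>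
definition M_mat :: "nat set \<Rightarrow> nat set \<Rightarrow> real \<Rightarrow> real \<Rightarrow> (nat \<Rightarrow> real poly) \<Rightarrow> (nat \<Rightarrow> real poly)
    \<Rightarrow> real \<Rightarrow> real mat" where
  "M_mat U V N \<beta> R R' x =
    (let k1 = card U; k2 = card V; k = k1 + k2 in
     mat k k (\<lambda>(i,j).
       if i < k1 then poly (R (sorted_list_of_set U ! i)) (x + real j)
       else s_poch (N - real k + 1) (k - j) x * s_poch (N + \<beta> + 1) j (x + real j)
            * poly (R' (sorted_list_of_set V ! (i - k1))) (x + real j)))"

definition denom :: "nat \<Rightarrow> nat \<Rightarrow> real \<Rightarrow> real \<Rightarrow> real \<Rightarrow> real" where
  "denom k k2 N \<beta> x =
     (\<Prod>i = 1..k2. s_poch (N - real k + 1) (k2 - i + 1) x * s_poch (N + \<beta> - real i + 2) (i - 1) x)"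

definition P_fun :: "nat set \<Rightarrow> nat set \<Rightarrow> real \<Rightarrow> real \<Rightarrow> (nat \<Rightarrow> real poly) \<Rightarrow> (nat \<Rightarrow> real poly)
    \<Rightarrow> real \<Rightarrow> real" where
  "P_fun U V N \<beta> R R' x =
     det (M_mat U V N \<beta> R R' x) / denom (card U + card V) (card V) N \<beta> x"

end

theory Submission
  imports Defs
begin

text \<open>Write the entries of \<open>M(x)\<close> as polynomials in \<open>x\<close> and multiply \<open>M\<close> on the right by
  the unipotent matrix of signed binomial coefficients, which replaces column \<open>j\<close> by the
  \<open>j\<close>-th forward difference of the columns.  In a row \<open>R_u(x + l)\<close> the \<open>j\<close>-th difference
  has degree \<open>u - j\<close> and top coefficient \<open>r_u u(u-1)\<cdots>(u-j+1)\<close>.  In a row of the second kind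
  the factor \<open>s^{N-k+1}_{k-j}(x)\<close> survives the differencing, and the remaining factor satisfies a
  first-order recursion showing that it has degree \<open>v\<close> with top coefficient
  \<open>r'_v (\<beta> - v)_j\<close>.  Hence \<open>det M\<close> has degree at most the sum of these row degrees minus
  \<open>0 + 1 + \<dots> + (k-1)\<close>, and its coefficient there is a Vandermonde determinant in the
  falling-factorial basis with nodes \<open>u \<in> U\<close> and \<open>v - \<beta>, v \<in> V\<close>; it is nonzero because
  \<open>\<beta> + u - v \<noteq> 0\<close>.  Finally every Leibniz term of \<open>det M\<close> is divisible by the
  denominator, because the last \<open>k\<^sub>2\<close> rows pick \<open>k\<^sub>2\<close> distinct columns and the column factors
  form divisibility chains.\<close>

lemma poly_det_map_mat: "poly (det A) x = det (map_mat (\<lambda>p. poly p x) A)"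
  unfolding det_def by (simp add: poly_sum poly_prod of_int_poly)

lemma coeff_mult_at_degree_bounds:
  fixes p q :: "'a::comm_semiring_1 poly"
  assumes p: "degree p \<le> m" and q: "degree q \<le> n"
  shows "coeff (p * q) (m + n) = coeff p m * coeff q n"
proof -
  have "coeff (p * q) (m + n) = (\<Sum>i\<le>m + n. coeff p i * coeff q (m + n - i))"
    by (rule coeff_mult)
  also have "\<dots> = (\<Sum>i\<in>{m}. coeff p i * coeff q (m + n - i))"
  proof (rule sum.mono_neutral_right)
    show "\<forall>i\<in>{..m + n} - {m}. coeff p i * coeff q (m + n - i) = 0"
    proof
      fix i assume i: "i \<in> {..m + n} - {m}"
      show "coeff p i * coeff q (m + n - i) = 0"
      proof (cases "i < m")
        case True
        then show ?thesis using q i by (simp add: coeff_eq_0)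
      next
        case False
        then show ?thesis using p i by (simp add: coeff_eq_0)
      qed
    qed
  qed auto
  finally show ?thesis by simp
qed

lemma coeff_prod_at_degree_bounds:
  fixes f :: "'b \<Rightarrow> 'a::comm_semiring_1 poly"
  assumes "finite I" and "\<And>i. i \<in> I \<Longrightarrow> degree (f i) \<le> d i"
  shows "degree (prod f I) \<le> sum d I \<and> coeff (prod f I) (sum d I) = (\<Prod>i\<in>I. coeff (f i) (d i))"
  using assms
proof (induction I rule: finite_induct)
  case (insert x F)
  then have IH: "degree (prod f F) \<le> sum d F"
      "coeff (prod f F) (sum d F) = (\<Prod>i\<in>F. coeff (f i) (d i))"
    and dx: "degree (f x) \<le> d x" by auto
  have "degree (f x * prod f F) \<le> d x + sum d F"
    using degree_mult_le[of "f x" "prod f F"] IH dx by linarith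
  with insert IH coeff_mult_at_degree_bounds[OF dx IH(1)] show ?case by simp
qed simp

lemma leibniz_term_top_coeff:
  fixes A :: "'a::comm_semiring_1 poly mat"
  assumes p: "p permutes {..<n}"
    and deg: "\<And>i j. i < n \<Longrightarrow> j < n \<Longrightarrow> A $$ (i,j) = 0 \<or> degree (A $$ (i,j)) + j \<le> a i"
  defines "D \<equiv> (\<Sum>i<n. a i) - (\<Sum>j<n. j)"
    and "C \<equiv> \<lambda>i j. coeff (A $$ (i,j)) (a i - j)"
  shows "degree (\<Prod>i<n. A $$ (i, p i)) \<le> D"
    and "coeff (\<Prod>i<n. A $$ (i, p i)) D = (\<Prod>i<n. C i (p i))"
    and "(\<Prod>i<n. C i (p i)) \<noteq> 0 \<Longrightarrow> (\<Sum>j<n. j) \<le> (\<Sum>i<n. a i)"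
proof -
  have pin: "p i < n" if "i < n" for i
    using p that permutes_in_image by fastforce
  have "degree (\<Prod>i<n. A $$ (i, p i)) \<le> D \<and> coeff (\<Prod>i<n. A $$ (i, p i)) D = (\<Prod>i<n. C i (p i))
      \<and> ((\<Prod>i<n. C i (p i)) \<noteq> 0 \<longrightarrow> (\<Sum>j<n. j) \<le> (\<Sum>i<n. a i))"
  proof (cases "\<exists>i<n. A $$ (i, p i) = 0")
    case True
    then obtain i where "i < n" "A $$ (i, p i) = 0" by auto
    then have "(\<Prod>i<n. A $$ (i, p i)) = 0" "(\<Prod>i<n. C i (p i)) = 0"
      by (auto simp: C_def intro!: prod_zero bexI[of _ i])
    then show ?thesis by simp
  next
    case False
    then have dg: "degree (A $$ (i, p i)) + p i \<le> a i" if "i < n" for i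
      using deg[OF that pin[OF that]] that by auto
    have sp: "(\<Sum>i<n. p i) = (\<Sum>j<n. j)"
      using sum.permute[OF p, of id] by (simp add: comp_def)
    have le: "(\<Sum>i<n. p i) \<le> (\<Sum>i<n. a i)"
      by (rule sum_mono) (use dg in fastforce)
    have sd: "(\<Sum>i<n. a i - p i) = D"
      unfolding D_def sp[symmetric] using dg by (subst sum_subtractf_nat) fastforce+
    have "degree (\<Prod>i<n. A $$ (i, p i)) \<le> (\<Sum>i<n. a i - p i) \<and>
        coeff (\<Prod>i<n. A $$ (i, p i)) (\<Sum>i<n. a i - p i) = (\<Prod>i<n. C i (p i))"
      unfolding C_def by (rule coeff_prod_at_degree_bounds) (use dg in fastforce)+
    then show ?thesis using sd le sp by auto
  qed
  then show "degree (\<Prod>i<n. A $$ (i, p i)) \<le> D"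
    and "coeff (\<Prod>i<n. A $$ (i, p i)) D = (\<Prod>i<n. C i (p i))"
    and "(\<Prod>i<n. C i (p i)) \<noteq> 0 \<Longrightarrow> (\<Sum>j<n. j) \<le> (\<Sum>i<n. a i)"
    by auto
qed

lemma degree_det_poly_mat:
  fixes A :: "'a::comm_ring_1 poly mat"
  assumes A: "A \<in> carrier_mat n n"
    and deg: "\<And>i j. i < n \<Longrightarrow> j < n \<Longrightarrow> A $$ (i,j) = 0 \<or> degree (A $$ (i,j)) + j \<le> a i"
    and top: "det (mat n n (\<lambda>(i,j). coeff (A $$ (i,j)) (a i - j))) \<noteq> 0"
  shows "degree (det A) + (\<Sum>j<n. j) = (\<Sum>i<n. a i)"
    and "lead_coeff (det A) = det (mat n n (\<lambda>(i,j). coeff (A $$ (i,j)) (a i - j)))"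
proof -
  define C where "C = mat n n (\<lambda>(i,j). coeff (A $$ (i,j)) (a i - j))"
  define D where "D = (\<Sum>i<n. a i) - (\<Sum>j<n. j)"
  have C: "C \<in> carrier_mat n n" unfolding C_def by simp
  have C_entry: "(\<Prod>i<n. C $$ (i, p i)) = (\<Prod>i<n. coeff (A $$ (i, p i)) (a i - p i))"
    if "p permutes {..<n}" for p
    using that permutes_in_image by (fastforce simp: C_def intro!: prod.cong)
  have term_deg: "degree (\<Prod>i<n. A $$ (i, p i)) \<le> D" if "p permutes {..<n}" for p
    using leibniz_term_top_coeff(1)[OF that deg] unfolding D_def .
  have term_coeff: "coeff (\<Prod>i<n. A $$ (i, p i)) D = (\<Prod>i<n. C $$ (i, p i))"
    if "p permutes {..<n}" for p
    using leibniz_term_top_coeff(2)[OF that deg] C_entry[OF that] unfolding D_def by simp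
  have term_sum: "(\<Sum>j<n. j) \<le> (\<Sum>i<n. a i)"
    if "p permutes {..<n}" "(\<Prod>i<n. C $$ (i, p i)) \<noteq> 0" for p
    using leibniz_term_top_coeff(3)[OF that(1) deg] that C_entry by simp
  have det_A: "det A = (\<Sum>p | p permutes {..<n}. of_int (sign p) * (\<Prod>i<n. A $$ (i, p i)))"
    using det_def'[OF A] by (simp add: atLeast0LessThan)
  have det_C: "det C = (\<Sum>p | p permutes {..<n}. of_int (sign p) * (\<Prod>i<n. C $$ (i, p i)))"
    using det_def'[OF C] by (simp add: atLeast0LessThan)
  have coeff_D: "coeff (det A) D = det C"
    unfolding det_A det_C coeff_sum
    by (rule sum.cong) (simp_all add: of_int_poly term_coeff)
  have "degree (det A) \<le> D"
    unfolding det_A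
  proof (rule degree_sum_le)
    fix p assume "p \<in> {p. p permutes {..<n}}"
    then show "degree (of_int (sign p) * (\<Prod>i<n. A $$ (i, p i))) \<le> D"
      using term_deg by (simp add: of_int_poly) (meson degree_smult_le order_trans)
  qed (simp add: finite_permutations)
  moreover have "D \<le> degree (det A)"
    using le_degree top coeff_D unfolding C_def by metis
  moreover obtain p where "p permutes {..<n}" "(\<Prod>i<n. C $$ (i, p i)) \<noteq> 0"
    using top unfolding C_def[symmetric] det_C by (metis (mono_tags, lifting) mult_zero_right sum.neutral mem_Collect_eq)
  then have "(\<Sum>j<n. j) \<le> (\<Sum>i<n. a i)"
    by (rule term_sum)
  ultimately show "degree (det A) + (\<Sum>j<n. j) = (\<Sum>i<n. a i)"
    and "lead_coeff (det A) = det (mat n n (\<lambda>(i,j). coeff (A $$ (i,j)) (a i - j)))"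
    using coeff_D unfolding D_def C_def by auto
qed

definition fwd_diff :: "(nat \<Rightarrow> 'a::comm_ring_1) \<Rightarrow> nat \<Rightarrow> 'a" where
  "fwd_diff \<phi> j = (\<Sum>l\<le>j. (-1)^(j - l) * of_nat (j choose l) * \<phi> l)"

lemma fwd_diff_0 [simp]: "fwd_diff \<phi> 0 = \<phi> 0"
  by (simp add: fwd_diff_def)

lemma fwd_diff_Suc: "fwd_diff \<phi> (Suc j) = fwd_diff (\<lambda>l. \<phi> (Suc l)) j - fwd_diff \<phi> j"
proof -
  have pascal: "of_nat (Suc j choose l) = of_nat (j choose l)
      + (if l = 0 then 0 else of_nat (j choose (l - 1)) :: 'a)" for l
    by (cases l) simp_all
  have low: "(\<Sum>l\<le>Suc j. (-1)^(Suc j - l) * of_nat (j choose l) * \<phi> l) = - fwd_diff \<phi> j"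
    unfolding fwd_diff_def sum.atMost_Suc sum_negf[symmetric]
    by (auto simp: Suc_diff_le binomial_eq_0 intro!: sum.cong)
  have high: "(\<Sum>l\<le>Suc j. (-1)^(Suc j - l) * (if l = 0 then 0 else of_nat (j choose (l - 1))) * \<phi> l)
      = fwd_diff (\<lambda>l. \<phi> (Suc l)) j"
    unfolding fwd_diff_def sum.atMost_Suc_shift by simp
  show ?thesis
    unfolding fwd_diff_def[of _ "Suc j"] pascal distrib_left distrib_right sum.distrib
    using low high unfolding fwd_diff_def by (simp add: mult.assoc)
qed

lemma fwd_diff_hom:
  assumes "\<And>x y. F (x - y) = F x - F y"
  shows "fwd_diff (\<lambda>l. F (\<phi> l)) j = F (fwd_diff \<phi> j)"
proof (induction j arbitrary: \<phi>)
  case (Suc j)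
  show ?case unfolding fwd_diff_Suc using Suc[of \<phi>] Suc[of "\<lambda>l. \<phi> (Suc l)"] assms by simp
qed simp

lemma fwd_diff_diff: "fwd_diff (\<lambda>l. \<phi> l - \<psi> l) j = fwd_diff \<phi> j - fwd_diff \<psi> j"
  unfolding fwd_diff_def by (simp add: sum_subtractf algebra_simps)

lemma fwd_diff_cong: "(\<And>l. l \<le> j \<Longrightarrow> \<phi> l = \<psi> l) \<Longrightarrow> fwd_diff \<phi> j = fwd_diff \<psi> j"
  unfolding fwd_diff_def by (rule sum.cong) auto

definition fwd_diff_mat :: "nat \<Rightarrow> 'a::comm_ring_1 mat" where
  "fwd_diff_mat n = mat n n (\<lambda>(l,j). if l \<le> j then (-1)^(j - l) * of_nat (j choose l) else 0)"

lemma fwd_diff_mat_carrier: "fwd_diff_mat n \<in> carrier_mat n n"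
  unfolding fwd_diff_mat_def by simp

lemma det_fwd_diff_mat: "det (fwd_diff_mat n) = 1"
proof -
  have ut: "upper_triangular (fwd_diff_mat n)"
    unfolding upper_triangular_def fwd_diff_mat_def by auto
  have "diag_mat (fwd_diff_mat n) = replicate n (1::'a)"
    by (rule nth_equalityI) (auto simp: diag_mat_def fwd_diff_mat_def)
  then show ?thesis
    using det_upper_triangular[OF ut fwd_diff_mat_carrier] by (metis prod_list_replicate power_one)
qed

lemma mult_fwd_diff_mat:
  assumes A: "A \<in> carrier_mat n n" and i: "i < n" and j: "j < n"
  shows "(A * fwd_diff_mat n) $$ (i,j) = fwd_diff (\<lambda>l. A $$ (i,l)) j"
proof -
  have "(A * fwd_diff_mat n) $$ (i,j) = (\<Sum>l\<in>{0..<n}. A $$ (i,l) * fwd_diff_mat n $$ (l,j))"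
    using A i j by (simp add: scalar_prod_def fwd_diff_mat_def)
  also have "\<dots> = (\<Sum>l\<le>j. (-1)^(j - l) * of_nat (j choose l) * A $$ (i,l))"
    by (rule sum.mono_neutral_cong_right) (use j in \<open>auto simp: fwd_diff_mat_def\<close>)
  finally show ?thesis unfolding fwd_diff_def .
qed

definition falling_fact :: "'a::comm_ring_1 \<Rightarrow> nat \<Rightarrow> 'a" where
  "falling_fact y j = (\<Prod>t<j. y - of_nat t)"

lemma falling_fact_Suc: "falling_fact y (Suc j) = y * falling_fact (y - 1) j"
  unfolding falling_fact_def by (subst prod.lessThan_Suc_shift) (simp add: algebra_simps)

lemma falling_fact_eq_pochhammer: "falling_fact y j = pochhammer (y - of_nat j + 1) j"
proof (induction j)
  case (Suc j)
  have "falling_fact y (Suc j) = (y - of_nat j) * falling_fact y j"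
    by (simp add: falling_fact_def mult.commute)
  also have "\<dots> = pochhammer (y - of_nat (Suc j) + 1) (Suc j)"
    by (simp add: Suc pochhammer_rec algebra_simps)
  finally show ?case .
qed (simp add: falling_fact_def)

lemma pochhammer_minus_falling_fact: "pochhammer (- y) j = (-1)^j * falling_fact y j"
  by (simp add: pochhammer_minus falling_fact_eq_pochhammer)

lemma poly_falling_fact: "poly (falling_fact p j) x = falling_fact (poly p x) j"
  by (simp add: falling_fact_def poly_prod of_nat_poly)

lemma falling_fact_pcompose: "falling_fact p j \<circ>\<^sub>p q = falling_fact (p \<circ>\<^sub>p q) j"
  by (simp add: falling_fact_def pcompose_prod pcompose_diff of_nat_poly)

lemma falling_fact_dvd_mono: "j \<le> j' \<Longrightarrow> falling_fact y j dvd falling_fact y j'"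
  unfolding falling_fact_def by (rule prod_dvd_prod_subset) auto

lemma poly_pochhammer: "poly (pochhammer p m) x = pochhammer (poly p x) m"
  by (induction m) (simp_all add: pochhammer_Suc of_nat_poly)

lemma pochhammer_pcompose: "pochhammer p m \<circ>\<^sub>p q = pochhammer (p \<circ>\<^sub>p q) m"
  by (induction m) (simp_all add: pochhammer_Suc pcompose_mult pcompose_add of_nat_poly pcompose_1)

lemma pochhammer_dvd_mono: "m \<le> m' \<Longrightarrow> pochhammer y m dvd pochhammer y m'"
  by (metis dvd_triv_left le_add_diff_inverse pochhammer_product')

lemma pochhammer_linear_Suc:
  "pochhammer [:c, d:] (Suc m) = pochhammer [:c, d:] m * [:c + of_nat m, d:]"
  by (simp add: pochhammer_Suc of_nat_poly)

lemma degree_pochhammer_linear: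
  fixes c d :: "'a::idom"
  assumes "d \<noteq> 0"
  shows "degree (pochhammer [:c, d:] m) = m \<and> lead_coeff (pochhammer [:c, d:] m) = d ^ m"
proof (induction m)
  case (Suc m)
  let ?P = "pochhammer [:c, d:] m" and ?L = "[:c + of_nat m, d:]"
  have P: "?P \<noteq> 0"
    using Suc assms by (metis leading_coeff_0_iff power_eq_0_iff)
  have L: "?L \<noteq> 0" using assms by simp
  have "degree (?P * ?L) = Suc m"
    using degree_mult_eq[OF P L] Suc assms by simp
  moreover have "lead_coeff (?P * ?L) = d ^ Suc m"
    unfolding lead_coeff_mult using Suc assms by auto
  ultimately show ?case by (simp only: pochhammer_linear_Suc)
qed simp

lemma degree_falling_fact_linear:
  fixes c d :: "'a::idom"
  assumes "d \<noteq> 0"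
  shows "degree (falling_fact [:c, d:] m) = m \<and> lead_coeff (falling_fact [:c, d:] m) = d ^ m"
proof -
  have "falling_fact [:c, d:] m = pochhammer [:c - of_nat m + 1, d:] m"
    by (simp add: falling_fact_eq_pochhammer of_nat_poly one_pCons)
  then show ?thesis
    using degree_pochhammer_linear[OF assms, of "c - of_nat m + 1" m] by auto
qed

lemma det_mat_scale_rows:
  "det (mat n n (\<lambda>(i,j). c i * F i j)) = (\<Prod>i<n. c i) * det (mat n n (\<lambda>(i,j). F i j :: 'a::comm_ring_1))"
proof -
  have entry: "(\<Prod>i<n. mat n n (\<lambda>(i,j). G i j) $$ (i, p i)) = (\<Prod>i<n. G i (p i))"
    if "p permutes {..<n}" for p and G :: "nat \<Rightarrow> nat \<Rightarrow> 'a"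
  proof (rule prod.cong)
    show "mat n n (\<lambda>(i,j). G i j) $$ (i, p i) = G i (p i)" if "i \<in> {..<n}" for i
      using that permutes_in_image[OF \<open>p permutes {..<n}\<close>, of i] by simp
  qed simp
  have "det (mat n n (\<lambda>(i,j). c i * F i j))
      = (\<Sum>p | p permutes {..<n}. (\<Prod>i<n. c i) * (of_int (sign p) * (\<Prod>i<n. F i (p i))))"
    unfolding det_def'[OF mat_carrier] atLeast0LessThan
    by (rule sum.cong) (simp_all add: entry[where G = "\<lambda>i j. c i * F i j"] prod.distrib mult_ac)
  also have "\<dots> = (\<Prod>i<n. c i) * det (mat n n (\<lambda>(i,j). F i j))"
    unfolding det_def'[OF mat_carrier] atLeast0LessThan sum_distrib_left
    by (rule sum.cong) (simp_all add: entry)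
  finally show ?thesis .
qed

lemma poly_eq_smult_prod_roots:
  fixes p :: "'a::idom poly"
  assumes dp: "degree p \<le> n" and root: "\<And>i. i < n \<Longrightarrow> poly p (r i) = 0"
    and inj: "\<And>i i'. i < n \<Longrightarrow> i' < n \<Longrightarrow> i \<noteq> i' \<Longrightarrow> r i \<noteq> r i'"
  shows "p = smult (coeff p n) (\<Prod>i<n. [:- r i, 1:])"
proof -
  have dvd: "(\<Prod>i<m. [:- r i, 1:]) dvd p" if "m \<le> n" for m
    using that
  proof (induction m)
    case (Suc m)
    then obtain q where q: "p = (\<Prod>i<m. [:- r i, 1:]) * q" by (auto elim: dvdE)
    have "(\<Prod>i<m. r m - r i) \<noteq> 0" using inj Suc.prems by (auto simp: prod_zero_iff)
    moreover have "poly p (r m) = (\<Prod>i<m. r m - r i) * poly q (r m)"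
      unfolding q by (simp add: poly_prod)
    ultimately have "poly q (r m) = 0" using root[of m] Suc.prems by simp
    then have "[:- r m, 1:] dvd q" using dvd_iff_poly_eq_0[of "- r m" q] by simp
    then have "(\<Prod>i<m. [:- r i, 1:]) * [:- r m, 1:] dvd p"
      unfolding q by (rule mult_dvd_mono[OF dvd_refl])
    then show ?case by simp
  qed simp
  obtain q where q: "p = (\<Prod>i<n. [:- r i, 1:]) * q" using dvd[of n] by (auto elim: dvdE)
  have "degree (\<Prod>i<n. [:- r i, 1::'a:]) = n"
    by (simp add: degree_prod_eq_sum_degree)
  moreover have "lead_coeff (\<Prod>i<n. [:- r i, 1::'a:]) = 1"
    by (simp only: lead_coeff_prod) simp
  ultimately have lin: "degree (\<Prod>i<n. [:- r i, 1::'a:]) = n \<and> coeff (\<Prod>i<n. [:- r i, 1::'a:]) n = 1"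
    by simp
  show ?thesis
  proof (cases "q = 0")
    case False
    then have "degree q = 0" using dp lin by (auto simp: q degree_mult_eq)
    then obtain c where "q = [:c:]" by (metis degree_0_id)
    then show ?thesis using lin by (simp add: q)
  qed (simp add: q)
qed

text \<open>Replacing the last node by the indeterminate turns the determinant into a polynomial of
  degree at most \<open>n\<close> vanishing at the other nodes, whose top coefficient is the smaller
  determinant.\<close>
lemma det_falling_fact_vandermonde:
  fixes y :: "nat \<Rightarrow> 'a::idom"
  assumes "\<And>i i'. i < n \<Longrightarrow> i' < n \<Longrightarrow> i \<noteq> i' \<Longrightarrow> y i \<noteq> y i'"
  shows "det (mat n n (\<lambda>(i,j). falling_fact (y i) j)) = (\<Prod>i'<n. \<Prod>i<i'. y i' - y i)"
  using assms
proof (induction n)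
  case 0
  then show ?case by (simp add: det_dim_zero[OF mat_carrier])
next
  case (Suc n)
  let ?X = "falling_fact [:0, 1::'a:]"
  have X: "degree (?X j) = j" "coeff (?X j) j = 1" for j
    using degree_falling_fact_linear[of "1::'a" 0 j] by auto
  define W :: "'a poly mat" where
    "W = mat (Suc n) (Suc n) (\<lambda>(i,j). if i < n then [:falling_fact (y i) j:] else ?X j)"
  have W: "W \<in> carrier_mat (Suc n) (Suc n)" unfolding W_def by simp
  have eval: "poly (det W) z = det (mat (Suc n) (Suc n) (\<lambda>(i,j). falling_fact (if i < n then y i else z) j))"
    for z
    unfolding poly_det_map_mat
    by (rule arg_cong[of _ _ det], rule eq_matI) (auto simp: W_def poly_falling_fact)
  have root: "poly (det W) (y i) = 0" if i: "i < n" for i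
  proof -
    let ?A = "mat (Suc n) (Suc n) (\<lambda>(i',j). falling_fact (if i' < n then y i' else y i) j)"
    have r: "row ?A i = row ?A n" by (rule eq_vecI) (use i in simp_all)
    show ?thesis unfolding eval
      by (rule det_identical_rows[OF mat_carrier _ _ _ r]) (use i in simp_all)
  qed
  have cofactor_const: "degree (cofactor W n j) = 0" for j
  proof -
    have "degree (det (mat_delete W n j)) \<le> 0 * n"
      by (rule degree_det_le) (auto simp: mat_delete_def W_def)
    moreover have "degree ((-1::'a poly) ^ (n+j)) = 0"
      using degree_power_le[of "-1::'a poly" "n+j"] by simp
    ultimately show ?thesis unfolding cofactor_def
      using degree_mult_le[of "(-1)^(n+j)" "det (mat_delete W n j)"] by simp
  qed
  have laplace: "det W = (\<Sum>j<Suc n. ?X j * cofactor W n j)"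
    unfolding laplace_expansion_row[OF W lessI] by (rule sum.cong) (auto simp: W_def)
  have term_deg: "degree (?X j * cofactor W n j) \<le> j" for j
    using degree_mult_le[of "?X j" "cofactor W n j"] cofactor_const[of j] X(1)[of j] by simp
  have deg_W: "degree (det W) \<le> n"
    unfolding laplace by (rule degree_sum_le) (use term_deg le_trans less_Suc_eq_le in blast)+
  have "coeff (?X j * cofactor W n j) n = 0" if "j < n" for j
    using term_deg[of j] that by (simp add: coeff_eq_0)
  then have "coeff (det W) n = coeff (?X n * cofactor W n n) (n + 0)"
    unfolding laplace coeff_sum by simp
  also have "\<dots> = coeff (cofactor W n n) 0"
    by (subst coeff_mult_at_degree_bounds) (simp_all add: X cofactor_const)
  also have "\<dots> = poly (det (mat_delete W n n)) 0"
    by (simp add: cofactor_def poly_0_coeff_0)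
  also have "\<dots> = det (mat n n (\<lambda>(i,j). falling_fact (y i) j))"
    unfolding poly_det_map_mat by (rule arg_cong[of _ _ det], rule eq_matI) (auto simp: W_def mat_delete_def)
  finally have top: "coeff (det W) n = (\<Prod>i'<n. \<Prod>i<i'. y i' - y i)"
    using Suc by simp
  have W_roots: "det W = smult (coeff (det W) n) (\<Prod>i<n. [:- y i, 1:])"
    by (rule poly_eq_smult_prod_roots[OF deg_W root]) (use Suc.prems in auto)
  have "poly (det W) (y n) = (\<Prod>i'<n. \<Prod>i<i'. y i' - y i) * (\<Prod>i<n. y n - y i)"
    using top by (subst W_roots) (simp add: poly_prod)
  moreover have "poly (det W) (y n) = det (mat (Suc n) (Suc n) (\<lambda>(i,j). falling_fact (y i) j))"
    unfolding eval by (rule arg_cong[of _ _ det], rule eq_matI) (auto simp: less_Suc_eq)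
  ultimately show ?case by simp
qed

abbreviation shift1 :: "'a::comm_ring_1 poly \<Rightarrow> 'a poly" where
  "shift1 h \<equiv> h \<circ>\<^sub>p [:1, 1:]"

lemma pcompose_translate_translate:
  "(h \<circ>\<^sub>p [:a, 1:]) \<circ>\<^sub>p [:b, 1:] = h \<circ>\<^sub>p [:a + b, 1::'a::comm_ring_1:]"
  by (simp add: pcompose_assoc[symmetric] pcompose_pCons)

lemma pcompose_x_power: "([:0, 1:] ^ i) \<circ>\<^sub>p q = q ^ i"
  by (induction i) (simp_all add: pcompose_mult pcompose_pCons pcompose_1)

lemma coeff_shift1:
  fixes h :: "'a::comm_ring_1 poly"
  assumes "degree h \<le> n"
  shows "coeff (shift1 h) m = (\<Sum>i\<le>n. coeff h i * of_nat (i choose m))"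
proof -
  have "shift1 h = (\<Sum>i\<le>n. smult (coeff h i) ([:1, 1:] ^ i))"
    by (subst poly_as_sum_of_monoms'[OF assms, symmetric])
      (simp add: pcompose_sum monom_altdef pcompose_smult pcompose_pCons pcompose_x_power)
  then have "coeff (shift1 h) m = (\<Sum>i\<le>n. coeff h i * coeff ([:1, 1:] ^ i) m)"
    by (simp add: coeff_sum)
  also have "\<dots> = (\<Sum>i\<le>n. coeff h i * of_nat (i choose m))"
  proof (rule sum.cong)
    fix i
    show "coeff h i * coeff ([:1, 1:] ^ i) m = coeff h i * of_nat (i choose m)"
    proof (cases "m \<le> i")
      case False
      then have "coeff ([:1::'a, 1:] ^ i) m = 0"
        by (intro coeff_eq_0) (simp add: degree_linear_power)
      then show ?thesis using False by (simp add: binomial_eq_0)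
    qed (simp add: coeff_linear_poly_power)
  qed simp
  finally show ?thesis .
qed

lemma
  fixes h :: "'a::comm_ring_1 poly"
  assumes "degree h \<le> n"
  shows coeff_shift1_above: "n < m \<Longrightarrow> coeff (shift1 h) m = 0"
    and coeff_shift1_top: "coeff (shift1 h) n = coeff h n"
    and coeff_shift1_below_top: "n \<ge> 1 \<Longrightarrow> coeff (shift1 h) (n - 1) = coeff h (n - 1) + of_nat n * coeff h n"
proof -
  show "n < m \<Longrightarrow> coeff (shift1 h) m = 0"
    by (simp add: coeff_shift1[OF assms] binomial_eq_0)
  have "coeff (shift1 h) n = (\<Sum>i\<in>{n}. coeff h i * of_nat (i choose n))"
    unfolding coeff_shift1[OF assms] by (rule sum.mono_neutral_right) (auto simp: binomial_eq_0)
  then show "coeff (shift1 h) n = coeff h n" by simp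
  assume "n \<ge> 1"
  then have "coeff (shift1 h) (n - 1) = (\<Sum>i\<in>{n - 1, n}. coeff h i * of_nat (i choose (n - 1)))"
    unfolding coeff_shift1[OF assms]
  proof (intro sum.mono_neutral_right ballI)
    fix i assume "i \<in> {..n} - {n - 1, n}"
    then have "i < n - 1" by auto
    then show "coeff h i * of_nat (i choose (n - 1)) = 0" by (simp add: binomial_eq_0)
  qed auto
  moreover have "n choose (n - 1) = n"
    using binomial_symmetric[of "n - 1" n] \<open>n \<ge> 1\<close> by simp
  ultimately show "coeff (shift1 h) (n - 1) = coeff h (n - 1) + of_nat n * coeff h n"
    using \<open>n \<ge> 1\<close> by (simp add: algebra_simps)
qed

text \<open>Each difference of the translates \<open>f(x + l)\<close> lowers the degree by one and multiplies
  the top coefficient by the current degree.\<close>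
lemma fwd_diff_translates:
  fixes f :: "'a::comm_ring_1 poly"
  assumes "degree f \<le> n"
  shows "(fwd_diff (\<lambda>l. f \<circ>\<^sub>p [:of_nat l, 1:]) j = 0
           \<or> degree (fwd_diff (\<lambda>l. f \<circ>\<^sub>p [:of_nat l, 1:]) j) + j \<le> n)
     \<and> coeff (fwd_diff (\<lambda>l. f \<circ>\<^sub>p [:of_nat l, 1:]) j) (n - j) = coeff f n * falling_fact (of_nat n) j"
  using assms
proof (induction j arbitrary: f n)
  case 0
  then show ?case by (simp add: falling_fact_def)
next
  case (Suc j)
  define g where "g = shift1 f - f"
  have diff_g: "fwd_diff (\<lambda>l. f \<circ>\<^sub>p [:of_nat l, 1:]) (Suc j) = fwd_diff (\<lambda>l. g \<circ>\<^sub>p [:of_nat l, 1:]) j"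
    unfolding fwd_diff_Suc g_def pcompose_diff fwd_diff_diff
    by (simp add: pcompose_translate_translate add.commute)
  show ?case
  proof (cases n)
    case 0
    then obtain c where "f = [:c:]" using Suc.prems by (metis degree_0_id le_zero_eq)
    then have "g = 0" unfolding g_def by simp
    then show ?thesis
      unfolding diff_g using 0 by (cases j) (simp_all add: fwd_diff_def falling_fact_Suc)
  next
    case (Suc n')
    have "degree g \<le> n'"
    proof (rule degree_le, intro allI impI)
      fix m assume "n' < m"
      then consider "m = n" | "n < m" using Suc by linarith
      then show "coeff g m = 0"
        unfolding g_def using coeff_shift1_above[OF Suc.prems] coeff_shift1_top[OF Suc.prems] Suc.prems
        by cases (auto simp: coeff_eq_0)
    qed
    moreover have "coeff g n' = of_nat n * coeff f n"
      unfolding g_def using coeff_shift1_below_top[OF Suc.prems] Suc by simp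
    ultimately show ?thesis
      unfolding diff_g using Suc.IH Suc by (auto simp: falling_fact_Suc algebra_simps)
  qed
qed

lemma shift1_pochhammer_minus_x: "shift1 (pochhammer [:a, -1:] m) = pochhammer [:a - 1, -1::'a::comm_ring_1:] m"
  by (simp add: pochhammer_pcompose pcompose_pCons)

lemma pochhammer_minus_x_rec:
  "pochhammer [:a - 1, -1:] (Suc m) = [:a - 1, -1:] * pochhammer [:a, -1::'a::comm_ring_1:] m"
  by (simp add: pochhammer_rec one_pCons)

lemma falling_fact_minus_x_Suc:
  "falling_fact [:c, -1:] (Suc l) = [:c, -1:] * shift1 (falling_fact [:c, -1::'a::comm_ring_1:] l)"
  by (simp add: falling_fact_Suc falling_fact_pcompose pcompose_pCons one_pCons)

lemma coeff_minus_x_mult: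
  "coeff ([:c, -1:] * p) m = c * coeff p m - (if m = 0 then 0 else coeff p (m - 1))"
  for p :: "'a::comm_ring_1 poly"
  by (cases m) (simp_all add: mult_pCons_left coeff_pCons)

text \<open>Dividing the \<open>j\<close>-th difference of the second-kind row by its surviving Pochhammer
  factor gives this recursion (see \<open>fwd_diff_weighted_translates\<close>).\<close>
fun reduced_diff :: "'a::comm_ring_1 \<Rightarrow> 'a \<Rightarrow> 'a poly \<Rightarrow> nat \<Rightarrow> 'a poly" where
  "reduced_diff b c g 0 = g"
| "reduced_diff b c g (Suc j) =
     [:c, -1:] * shift1 (reduced_diff b c g j) - [:b - of_nat j, -1:] * reduced_diff b c g j"

lemma degree_reduced_diff:
  fixes g :: "'a::comm_ring_1 poly"
  assumes "degree g \<le> v"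
  shows "degree (reduced_diff b c g j) \<le> v
    \<and> coeff (reduced_diff b c g j) v = coeff g v * pochhammer (c - b - of_nat v) j"
proof (induction j)
  case 0
  then show ?case using assms by simp
next
  case (Suc j)
  define h where "h = reduced_diff b c g j"
  have dh: "degree h \<le> v" and ch: "coeff h v = coeff g v * pochhammer (c - b - of_nat v) j"
    using Suc unfolding h_def by auto
  have coeff_Suc: "coeff (reduced_diff b c g (Suc j)) m =
      c * coeff (shift1 h) m - (if m = 0 then 0 else coeff (shift1 h) (m - 1))
      - ((b - of_nat j) * coeff h m - (if m = 0 then 0 else coeff h (m - 1)))" for m
    by (simp only: reduced_diff.simps h_def[symmetric] coeff_diff coeff_minus_x_mult)
  have "degree (reduced_diff b c g (Suc j)) \<le> v"
  proof (rule degree_le, intro allI impI)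
    fix m assume m: "v < m"
    have "coeff (shift1 h) m = 0" "coeff h m = 0"
      using coeff_shift1_above[OF dh m] dh m by (auto intro: coeff_eq_0)
    moreover have "coeff (shift1 h) (m - 1) = coeff h (m - 1)"
      using coeff_shift1_top[OF dh] coeff_shift1_above[OF dh, of "m - 1"] dh m
      by (cases "m - 1 = v") (auto intro: coeff_eq_0)
    ultimately show "coeff (reduced_diff b c g (Suc j)) m = 0"
      unfolding coeff_Suc using m by simp
  qed
  moreover have "coeff (reduced_diff b c g (Suc j)) v = coeff h v * (c - b - of_nat v + of_nat j)"
    unfolding coeff_Suc using coeff_shift1_top[OF dh] coeff_shift1_below_top[OF dh]
    by (cases "v = 0") (simp_all add: algebra_simps)
  ultimately show ?case using ch by (simp add: pochhammer_Suc)
qed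

lemma fwd_diff_weighted_translates:
  fixes b c :: "'a::idom" and g :: "'a poly" and k :: nat
  defines "P \<equiv> \<lambda>l. pochhammer [:b - of_nat k + 1, -1:] (k - l)"
  assumes "j < k"
  shows "fwd_diff (\<lambda>l. P l * falling_fact [:c, -1:] l * (g \<circ>\<^sub>p [:of_nat l, 1:])) j
       = P j * reduced_diff b c g j"
  using assms(2)
proof (induction j)
  case 0
  then show ?case by (simp add: falling_fact_def)
next
  case (Suc j)
  define \<Psi> where "\<Psi> = (\<lambda>l. P l * falling_fact [:c, -1:] l * (g \<circ>\<^sub>p [:of_nat l, 1:]))"
  let ?Q = "falling_fact [:c, -1:]" and ?L = "[:b - of_nat k, -1:]"
  have jk: "j < k" using Suc by simp
  have IH: "fwd_diff \<Psi> j = P j * reduced_diff b c g j"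
    using Suc.IH jk unfolding \<Psi>_def by simp
  have P_Suc: "P l = P (Suc l) * [:b - of_nat l, -1:]" and shift_P: "shift1 (P l) = ?L * P (Suc l)"
    if "l < k" for l
  proof -
    have e: "k - l = Suc (k - Suc l)" and a: "b - of_nat k + 1 + of_nat (k - Suc l) = b - of_nat l"
      using that by (simp_all add: of_nat_diff)
    show "P l = P (Suc l) * [:b - of_nat l, -1:]"
      unfolding P_def e pochhammer_linear_Suc a ..
    show "shift1 (P l) = ?L * P (Suc l)"
      using pochhammer_minus_x_rec[of "b - of_nat k + 1" "k - Suc l"]
      unfolding P_def e shift1_pochhammer_minus_x by simp
  qed
  have shift_\<Psi>: "?L * \<Psi> (Suc l) = [:c, -1:] * shift1 (\<Psi> l)" if "l < k" for l
    unfolding \<Psi>_def pcompose_mult shift_P[OF that] falling_fact_minus_x_Suc pcompose_translate_translate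
    by (simp only: of_nat_Suc add.commute mult_ac)
  have "?L * fwd_diff (\<lambda>l. \<Psi> (Suc l)) j = fwd_diff (\<lambda>l. ?L * \<Psi> (Suc l)) j"
    by (rule fwd_diff_hom[symmetric]) (simp only: right_diff_distrib)
  also have "\<dots> = fwd_diff (\<lambda>l. [:c, -1:] * shift1 (\<Psi> l)) j"
    by (rule fwd_diff_cong) (use shift_\<Psi> Suc.prems in auto)
  also have "\<dots> = [:c, -1:] * shift1 (fwd_diff \<Psi> j)"
    by (rule fwd_diff_hom) (simp only: pcompose_diff right_diff_distrib)
  finally have A: "?L * fwd_diff (\<lambda>l. \<Psi> (Suc l)) j
      = [:c, -1:] * ?L * P (Suc j) * shift1 (reduced_diff b c g j)"
    unfolding IH pcompose_mult shift_P[OF jk] by (simp only: mult_ac)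
  have B: "?L * fwd_diff \<Psi> j = ?L * P (Suc j) * [:b - of_nat j, -1:] * reduced_diff b c g j"
    unfolding IH P_Suc[OF jk] by (simp only: mult_ac)
  have "?L * fwd_diff \<Psi> (Suc j) = ?L * (P (Suc j) * reduced_diff b c g (Suc j))"
    unfolding fwd_diff_Suc right_diff_distrib A B
    by (simp only: reduced_diff.simps right_diff_distrib mult_ac)
  moreover have "?L \<noteq> 0" by simp
  ultimately show ?case
    unfolding \<Psi>_def using mult_left_cancel by blast
qed

lemma prod_lessThan_add: "(\<Prod>i<m + n. f i) = (\<Prod>i<m. f i) * (\<Prod>i<n. f (m + i))"
  for m n :: nat by (induction n) (simp_all add: mult.assoc)

lemma sum_lessThan_add: "(\<Sum>i<m + n. f i) = (\<Sum>i<m. f i) + (\<Sum>i<n. f (m + i))"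
  for m n :: nat by (induction n) (simp_all add: add.assoc)

lemma prod_initial_dvd_prod:
  fixes f :: "nat \<Rightarrow> 'a::comm_semiring_1"
  assumes mono: "\<And>j j'. j \<le> j' \<Longrightarrow> f j dvd f j'" and "finite S"
  shows "(\<Prod>i<card S. f i) dvd prod f S"
  using assms(2)
proof (induction "card S" arbitrary: S)
  case (Suc m)
  define s where "s = Max S"
  have "S \<noteq> {}" using Suc.hyps(2) by auto
  then have s: "s \<in> S" "S \<subseteq> {..s}"
    using Suc by (auto simp: s_def)
  have "Suc m \<le> Suc s"
    using card_mono[OF _ s(2)] Suc.hyps(2) by simp
  moreover have "card (S - {s}) = m"
    using Suc.hyps(2) s(1) Suc.prems by simp
  then have IH: "(\<Prod>i<m. f i) dvd prod f (S - {s})"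
    using Suc.hyps(1)[of "S - {s}"] Suc.prems by simp
  ultimately have "(\<Prod>i<m. f i) * f m dvd prod f (S - {s}) * f s"
    by (intro mult_dvd_mono mono) simp_all
  then show ?case
    using prod.remove[OF Suc.prems s(1), of f] Suc.hyps(2)[symmetric] by (simp add: mult.commute)
qed simp

lemma prod_final_dvd_prod:
  fixes f :: "nat \<Rightarrow> 'a::comm_semiring_1"
  assumes anti: "\<And>j j'. j \<le> j' \<Longrightarrow> f j' dvd f j" and "finite S" "S \<subseteq> {..<L}"
  shows "(\<Prod>i<card S. f (L - card S + i)) dvd prod f S"
  using assms(2,3)
proof (induction "card S" arbitrary: S L)
  case (Suc m)
  define s where "s = Max S"
  have "S \<noteq> {}" using Suc.hyps(2) by auto
  then have s: "s \<in> S" "s < L"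
    using Suc by (auto simp: s_def)
  have "x < L - 1" if "x \<in> S - {s}" for x
  proof -
    have "x \<le> s" using Suc.prems(1) that by (simp add: s_def)
    then show ?thesis using that s(2) by auto
  qed
  moreover have "card (S - {s}) = m"
    using Suc.hyps(2) s(1) Suc.prems by simp
  ultimately have IH: "(\<Prod>i<m. f (L - 1 - m + i)) dvd prod f (S - {s})"
    using Suc.hyps(1)[of "S - {s}" "L - 1"] Suc.prems by auto
  have "Suc m \<le> L"
    using card_mono[OF _ Suc.prems(2)] Suc.hyps(2) by simp
  then have "(\<Prod>i<Suc m. f (L - Suc m + i)) = (\<Prod>i<m. f (L - 1 - m + i)) * f (L - 1)"
    by (simp add: Suc_diff_Suc)
  also have "\<dots> dvd prod f (S - {s}) * f s"
    using IH anti s by (simp add: mult_dvd_mono)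
  also have "\<dots> = prod f S"
    using prod.remove[OF Suc.prems(1) s(1), of f] by (simp add: mult.commute)
  finally show ?case using Suc.hyps(2) by simp
qed simp

lemma prod_pochhammer_falling_fact_dvd_det:
  fixes A :: "'a::comm_ring_1 mat"
  assumes A: "A \<in> carrier_mat (k1 + k2) (k1 + k2)"
    and rows: "\<And>i j. k1 \<le> i \<Longrightarrow> i < k1 + k2 \<Longrightarrow> j < k1 + k2 \<Longrightarrow>
      A $$ (i,j) = pochhammer q (k1 + k2 - j) * falling_fact p j * G i j"
  shows "(\<Prod>i<k2. pochhammer q (k2 - i)) * (\<Prod>i<k2. falling_fact p i) dvd det A"
  unfolding det_def'[OF A]
proof (rule dvd_sum)
  let ?k = "k1 + k2"
  fix \<sigma> assume "\<sigma> \<in> {\<sigma>. \<sigma> permutes {0..<?k}}"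
  then have \<sigma>: "\<sigma> permutes {0..<?k}" by simp
  have \<sigma>_in: "\<sigma> i < ?k" if "i < ?k" for i
    using \<sigma> that permutes_in_image by fastforce
  define S where "S = \<sigma> ` {k1..<?k}"
  have inj: "inj_on \<sigma> {k1..<?k}"
    using permutes_inj[OF \<sigma>] by (simp add: inj_on_def inj_def)
  have S: "finite S" "S \<subseteq> {..<?k}" "card S = k2"
    unfolding S_def using \<sigma>_in card_image[OF inj] by auto
  have "(\<Prod>i<k2. pochhammer q (k2 - i)) dvd (\<Prod>j\<in>S. pochhammer q (?k - j))"
    using prod_final_dvd_prod[of "\<lambda>j. pochhammer q (?k - j)", OF _ S(1,2)] S(3)
    by (simp add: pochhammer_dvd_mono)
  moreover have "(\<Prod>i<k2. falling_fact p i) dvd (\<Prod>j\<in>S. falling_fact p j)"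
    using prod_initial_dvd_prod[OF falling_fact_dvd_mono S(1)] S(3) by simp
  ultimately have "(\<Prod>i<k2. pochhammer q (k2 - i)) * (\<Prod>i<k2. falling_fact p i)
      dvd (\<Prod>i=k1..<?k. pochhammer q (?k - \<sigma> i)) * (\<Prod>i=k1..<?k. falling_fact p (\<sigma> i))"
    unfolding S_def prod.reindex[OF inj] comp_def by (rule mult_dvd_mono)
  also have "\<dots> dvd (\<Prod>i=k1..<?k. pochhammer q (?k - \<sigma> i) * falling_fact p (\<sigma> i) * G i (\<sigma> i))"
    unfolding prod.distrib by (rule dvd_triv_left)
  also have "\<dots> = (\<Prod>i=k1..<?k. A $$ (i, \<sigma> i))"
    by (rule prod.cong) (simp_all add: rows \<sigma>_in)
  also have "\<dots> dvd (\<Prod>i=0..<?k. A $$ (i, \<sigma> i))"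
    using prod.atLeastLessThan_concat[of 0 k1 ?k "\<lambda>i. A $$ (i, \<sigma> i)"] by (metis dvd_triv_right le0 le_add1)
  finally show "(\<Prod>i<k2. pochhammer q (k2 - i)) * (\<Prod>i<k2. falling_fact p i)
      dvd of_int (sign \<sigma>) * (\<Prod>i=0..<?k. A $$ (i, \<sigma> i))"
    by (rule dvd_mult)
qed

lemma
  assumes "finite F"
  shows prod_sorted_list_of_set: "(\<Prod>i<card F. f (sorted_list_of_set F ! i)) = prod f F"
    and sum_sorted_list_of_set: "(\<Sum>i<card F. g (sorted_list_of_set F ! i)) = sum g F"
proof -
  have "bij_betw (\<lambda>i. sorted_list_of_set F ! i) {..<card F} F"
    by (rule bij_betw_nth) (use assms in simp_all)
  then show "(\<Prod>i<card F. f (sorted_list_of_set F ! i)) = prod f F"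
    and "(\<Sum>i<card F. g (sorted_list_of_set F ! i)) = sum g F"
    by (simp_all add: prod.reindex_bij_betw sum.reindex_bij_betw)
qed

lemma prod_lower_pairs_add:
  "(\<Prod>i'<m + n. \<Prod>i<i'. f i' i)
     = (\<Prod>i'<m. \<Prod>i<i'. f i' i) * (\<Prod>i'<n. \<Prod>i<m. f (m + i') i)
       * (\<Prod>i'<n. \<Prod>i<i'. f (m + i') (m + i))"
  for m n :: nat
  by (simp add: prod_lessThan_add[of _ m] prod.distrib mult_ac)

lemma vandermonde_sorted_list_of_set:
  assumes "finite F"
  defines "xs \<equiv> sorted_list_of_set F"
  shows "(\<Prod>i'<card F. \<Prod>i<i'. real (xs ! i') - real (xs ! i)) = vandermonde F"
proof -
  let ?n = "card F"
  define pairs where "pairs = {(i, i'). i < i' \<and> i' < ?n}"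
  define h where "h = (\<lambda>(i, i'). (xs ! i, xs ! i'))"
  have len: "length xs = ?n" and set: "set xs = F" and dist: "distinct xs"
    using assms by (simp_all add: xs_def)
  have less: "xs ! i < xs ! j \<longleftrightarrow> i < j" if "i < ?n" "j < ?n" for i j
    using sorted_wrt_nth_less[OF strict_sorted_list_of_set[of F]] that len dist
    by (metis xs_def nat_neq_iff nth_eq_iff_index_eq order_less_asym)
  have img: "h ` pairs = {(a, b). a \<in> F \<and> b \<in> F \<and> a < b}"
  proof
    show "h ` pairs \<subseteq> {(a, b). a \<in> F \<and> b \<in> F \<and> a < b}"
      unfolding h_def pairs_def using less len set nth_mem by fastforce
    show "{(a, b). a \<in> F \<and> b \<in> F \<and> a < b} \<subseteq> h ` pairs"
    proof clarify
      fix a b assume "a \<in> F" "b \<in> F" "a < b"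
      then obtain i j where "i < ?n" "j < ?n" "a = xs ! i" "b = xs ! j"
        using set len by (metis in_set_conv_nth)
      then show "(a, b) \<in> h ` pairs"
        unfolding h_def pairs_def using less \<open>a < b\<close> by (auto intro!: image_eqI[of _ _ "(i, j)"])
    qed
  qed
  have inj: "inj_on h pairs"
    unfolding h_def pairs_def inj_on_def using dist len by (auto simp: nth_eq_iff_index_eq)
  have "vandermonde F = (\<Prod>(a, b)\<in>h ` pairs. real b - real a)"
    unfolding vandermonde_def img ..
  also have "\<dots> = (\<Prod>(i, i')\<in>pairs. real (xs ! i') - real (xs ! i))"
    unfolding prod.reindex[OF inj] by (rule prod.cong) (auto simp: h_def)
  also have "pairs = (\<lambda>(i', i). (i, i')) ` (SIGMA i':{..<?n}. {..<i'})"
    unfolding pairs_def by auto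
  also have "(\<Prod>(i, i')\<in>\<dots>. real (xs ! i') - real (xs ! i))
      = (\<Prod>(i', i)\<in>(SIGMA i':{..<?n}. {..<i'}). real (xs ! i') - real (xs ! i))"
    by (subst prod.reindex) (auto simp: inj_on_def intro!: prod.cong)
  also have "\<dots> = (\<Prod>i'<?n. \<Prod>i<i'. real (xs ! i') - real (xs ! i))"
    by (subst prod.Sigma) auto
  finally show ?thesis ..
qed

text \<open>\<open>M(x)\<close> with polynomial entries; \<open>falling_fact [:N + \<beta>, -1:] j\<close> is
  \<open>s^{N+\<beta>+1}_j(x + j)\<close> written as a polynomial in \<open>x\<close>.\<close>
definition M_poly_mat ::
    "nat set \<Rightarrow> nat set \<Rightarrow> real \<Rightarrow> real \<Rightarrow> (nat \<Rightarrow> real poly) \<Rightarrow> (nat \<Rightarrow> real poly) \<Rightarrow> real poly mat" where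
  "M_poly_mat U V N \<beta> R R' =
    (let k1 = card U; k = card U + card V in
     mat k k (\<lambda>(i,j).
       if i < k1 then R (sorted_list_of_set U ! i) \<circ>\<^sub>p [:of_nat j, 1:]
       else pochhammer [:N - of_nat k + 1, -1:] (k - j) * falling_fact [:N + \<beta>, -1:] j
            * (R' (sorted_list_of_set V ! (i - k1)) \<circ>\<^sub>p [:of_nat j, 1:])))"

lemma M_mat_eq_map_mat: "M_mat U V N \<beta> R R' x = map_mat (\<lambda>p. poly p x) (M_poly_mat U V N \<beta> R R')"
proof (rule eq_matI)
  fix i j
  assume "i < dim_row (map_mat (\<lambda>p. poly p x) (M_poly_mat U V N \<beta> R R'))"
    and "j < dim_col (map_mat (\<lambda>p. poly p x) (M_poly_mat U V N \<beta> R R'))"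
  then have ij: "i < card U + card V" "j < card U + card V"
    by (simp_all add: M_poly_mat_def Let_def)
  have "poly (falling_fact [:N + \<beta>, -1:] j) x = falling_fact (N + \<beta> - x) j"
    by (simp add: poly_falling_fact)
  also have "\<dots> = s_poch (N + \<beta> + 1) j (x + real j)"
    by (simp add: falling_fact_eq_pochhammer s_poch_def algebra_simps)
  finally have "poly (falling_fact [:N + \<beta>, -1:] j) x = s_poch (N + \<beta> + 1) j (x + real j)" .
  then show "M_mat U V N \<beta> R R' x $$ (i, j) = map_mat (\<lambda>p. poly p x) (M_poly_mat U V N \<beta> R R') $$ (i, j)"
    using ij by (simp add: M_mat_def M_poly_mat_def Let_def poly_pcompose poly_pochhammer s_poch_def
        algebra_simps)
qed (simp_all add: M_mat_def M_poly_mat_def Let_def)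

definition denom_poly :: "nat \<Rightarrow> nat \<Rightarrow> real \<Rightarrow> real \<Rightarrow> real poly" where
  "denom_poly k k2 N \<beta> = (\<Prod>i = 1..k2. pochhammer [:N - of_nat k + 1, -1:] (k2 - i + 1)
        * pochhammer [:N + \<beta> - of_nat i + 2, -1:] (i - 1))"

lemma poly_denom_poly: "poly (denom_poly k k2 N \<beta>) x = denom k k2 N \<beta> x"
  unfolding denom_poly_def denom_def by (simp add: poly_prod poly_pochhammer s_poch_def)

lemma denom_poly_eq:
  "denom_poly k k2 N \<beta>
     = (\<Prod>i<k2. pochhammer [:N - of_nat k + 1, -1:] (k2 - i)) * (\<Prod>i<k2. falling_fact [:N + \<beta>, -1:] i)"
proof -
  have "denom_poly k k2 N \<beta> = (\<Prod>i<k2. pochhammer [:N - of_nat k + 1, -1:] (k2 - Suc i + 1)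
        * pochhammer [:N + \<beta> - of_nat (Suc i) + 2, -1:] (Suc i - 1))"
    unfolding denom_poly_def One_nat_def by (simp only: prod.atLeast1_atMost_eq)
  also have "\<dots> = (\<Prod>i<k2. pochhammer [:N - of_nat k + 1, -1:] (k2 - i) * falling_fact [:N + \<beta>, -1:] i)"
  proof (rule prod.cong)
    fix i assume "i \<in> {..<k2}"
    then have "k2 - Suc i + 1 = k2 - i" by simp
    moreover have "falling_fact [:N + \<beta>, -1:] i = pochhammer [:N + \<beta> - of_nat (Suc i) + 2, -1:] i"
      by (simp add: falling_fact_eq_pochhammer of_nat_poly one_pCons algebra_simps)
    ultimately show "pochhammer [:N - of_nat k + 1, -1:] (k2 - Suc i + 1)
        * pochhammer [:N + \<beta> - of_nat (Suc i) + 2, -1:] (Suc i - 1)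
      = pochhammer [:N - of_nat k + 1, -1:] (k2 - i) * falling_fact [:N + \<beta>, -1:] i"
      by simp
  qed simp
  finally show ?thesis by (simp add: prod.distrib)
qed

lemma degree_denom_poly:
  "degree (denom_poly k k2 N \<beta>) = k2 * k2 \<and> lead_coeff (denom_poly k k2 N \<beta>) = (-1) ^ (k2 * k2)"
proof -
  let ?P = "\<lambda>i. pochhammer [:N - of_nat k + 1, -1:] (k2 - i)"
    and ?Q = "falling_fact [:N + \<beta>, -1:]"
  have P: "degree (?P i) = k2 - i" "lead_coeff (?P i) = (-1) ^ (k2 - i)" "?P i \<noteq> 0" for i
    using degree_pochhammer_linear[of "-1::real" "N - of_nat k + 1" "k2 - i"] by auto
  have Q: "degree (?Q i) = i" "lead_coeff (?Q i) = (-1) ^ i" "?Q i \<noteq> 0" for i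
    using degree_falling_fact_linear[of "-1::real" "N + \<beta>" i] by auto
  have "degree ((\<Prod>i<k2. ?P i) * (\<Prod>i<k2. ?Q i)) = (\<Sum>i<k2. k2 - i) + (\<Sum>i<k2. i)"
    using P Q by (simp add: degree_mult_eq degree_prod_eq_sum_degree prod_zero_iff)
  also have "\<dots> = (\<Sum>i<k2. k2)"
    unfolding sum.distrib[symmetric] by (rule sum.cong) auto
  also have "\<dots> = k2 * k2" by simp
  finally have "degree ((\<Prod>i<k2. ?P i) * (\<Prod>i<k2. ?Q i)) = k2 * k2" .
  moreover have "lead_coeff ((\<Prod>i<k2. ?P i) * (\<Prod>i<k2. ?Q i)) = (\<Prod>i<k2. (-1::real) ^ (k2 - i + i))"
    unfolding lead_coeff_mult lead_coeff_prod power_add prod.distrib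
    using P(2) Q(2) by (metis (no_types, lifting) prod.cong)
  ultimately show ?thesis
    unfolding denom_poly_eq by (simp add: power_mult)
qed

lemma sum_lessThan_id_eq_choose_two: "(\<Sum>j<n. j) = n choose 2"
  by (induction n) (simp_all add: numeral_2_eq_2)

lemma choose_two_add: "(m + n) choose 2 = (m choose 2) + m * n + (n choose 2)"
  using vandermonde[of m n 2] by (simp add: numeral_2_eq_2 atMost_Suc)

locale M_setting =
  fixes U V :: "nat set" and N \<beta> :: real and R R' :: "nat \<Rightarrow> real poly"
  assumes finite_U: "finite U" and finite_V: "finite V"
    and R: "\<forall>u\<in>U. R u \<noteq> 0 \<and> degree (R u) = u"
    and R': "\<forall>v\<in>V. R' v \<noteq> 0 \<and> degree (R' v) = v"
    and beta: "\<forall>u\<in>U. \<forall>v\<in>V. \<beta> + real u - real v \<noteq> 0"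
begin

abbreviation "k1 \<equiv> card U"
abbreviation "k2 \<equiv> card V"
abbreviation "k \<equiv> k1 + k2"
abbreviation "us \<equiv> sorted_list_of_set U"
abbreviation "vs \<equiv> sorted_list_of_set V"

lemma us_nth: "i < k1 \<Longrightarrow> us ! i \<in> U \<and> R (us ! i) \<noteq> 0 \<and> degree (R (us ! i)) = us ! i"
  using R finite_U nth_mem[of i us] by auto

lemma vs_nth: "i < k2 \<Longrightarrow> vs ! i \<in> V \<and> R' (vs ! i) \<noteq> 0 \<and> degree (R' (vs ! i)) = vs ! i"
  using R' finite_V nth_mem[of i vs] by auto

definition A :: "real poly mat" where "A = M_poly_mat U V N \<beta> R R'"

lemma A_carrier: "A \<in> carrier_mat k k"
  by (simp add: A_def M_poly_mat_def Let_def)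

lemma A_entry:
  "i < k \<Longrightarrow> j < k \<Longrightarrow> A $$ (i,j) = (if i < k1 then R (us ! i) \<circ>\<^sub>p [:of_nat j, 1:]
      else pochhammer [:N - of_nat k + 1, -1:] (k - j) * falling_fact [:N + \<beta>, -1:] j
        * (R' (vs ! (i - k1)) \<circ>\<^sub>p [:of_nat j, 1:]))"
  by (simp add: A_def M_poly_mat_def Let_def)

definition E :: "real poly mat" where "E = A * fwd_diff_mat k"

lemma det_E: "det E = det A"
  unfolding E_def det_mult[OF A_carrier fwd_diff_mat_carrier] det_fwd_diff_mat by simp

lemma E_entry_U:
  assumes "i < k1" "j < k"
  shows "E $$ (i,j) = fwd_diff (\<lambda>l. R (us ! i) \<circ>\<^sub>p [:of_nat l, 1:]) j"
proof -
  have ik: "i < k" using assms by simp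
  show ?thesis
    unfolding E_def mult_fwd_diff_mat[OF A_carrier ik assms(2)]
    by (rule fwd_diff_cong) (use assms in \<open>simp_all add: A_entry\<close>)
qed

lemma E_entry_V:
  assumes "k1 \<le> i" "i < k" "j < k"
  shows "E $$ (i,j) = pochhammer [:N - of_nat k + 1, -1:] (k - j) * reduced_diff N (N + \<beta>) (R' (vs ! (i - k1))) j"
proof -
  have "E $$ (i,j) = fwd_diff (\<lambda>l. pochhammer [:N - of_nat k + 1, -1:] (k - l) * falling_fact [:N + \<beta>, -1:] l
      * (R' (vs ! (i - k1)) \<circ>\<^sub>p [:of_nat l, 1:])) j"
    unfolding E_def mult_fwd_diff_mat[OF A_carrier assms(2,3)]
    by (rule fwd_diff_cong) (use assms in \<open>simp add: A_entry\<close>)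
  also have "\<dots> = pochhammer [:N - of_nat k + 1, -1:] (k - j) * reduced_diff N (N + \<beta>) (R' (vs ! (i - k1))) j"
    by (rule fwd_diff_weighted_translates[OF assms(3)])
  finally show ?thesis .
qed

definition top_deg :: "nat \<Rightarrow> nat" where
  "top_deg i = (if i < k1 then us ! i else k + vs ! (i - k1))"

definition top_coeff :: "nat \<Rightarrow> real" where
  "top_coeff i = (if i < k1 then lead_coeff (R (us ! i)) else (-1) ^ k * lead_coeff (R' (vs ! (i - k1))))"

definition node :: "nat \<Rightarrow> real" where
  "node i = (if i < k1 then real (us ! i) else real (vs ! (i - k1)) - \<beta>)"

lemma E_entry_degree:
  assumes "i < k" "j < k"
  shows "E $$ (i,j) = 0 \<or> degree (E $$ (i,j)) + j \<le> top_deg i"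
proof (cases "i < k1")
  case True
  then show ?thesis
    unfolding E_entry_U[OF True assms(2)] top_deg_def
    using fwd_diff_translates[of "R (us ! i)" "us ! i" j] us_nth by simp
next
  case False
  then have i1: "k1 \<le> i" by simp
  let ?g = "R' (vs ! (i - k1))"
  have "degree (pochhammer [:N - of_nat k + 1, -1::real:] (k - j)) = k - j"
    using degree_pochhammer_linear[of "-1::real"] by simp
  moreover have "degree (reduced_diff N (N + \<beta>) ?g j) \<le> vs ! (i - k1)"
    using degree_reduced_diff[of ?g "vs ! (i - k1)"] vs_nth[of "i - k1"] False assms by simp
  ultimately have "degree (E $$ (i,j)) \<le> (k - j) + vs ! (i - k1)"
    unfolding E_entry_V[OF i1 assms] using False
      degree_mult_le[of "pochhammer [:N - of_nat k + 1, -1::real:] (k - j)" "reduced_diff N (N + \<beta>) ?g j"]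
    by simp
  then have "degree (E $$ (i,j)) + j \<le> k + vs ! (i - k1)"
    using assms by arith
  then show ?thesis using False by (simp add: top_deg_def)
qed

lemma E_entry_top_coeff:
  assumes "i < k" "j < k"
  shows "coeff (E $$ (i,j)) (top_deg i - j) = top_coeff i * falling_fact (node i) j"
proof (cases "i < k1")
  case True
  then show ?thesis
    unfolding E_entry_U[OF True assms(2)] top_deg_def top_coeff_def node_def
    using fwd_diff_translates[of "R (us ! i)" "us ! i" j] us_nth by simp
next
  case False
  then have i1: "k1 \<le> i" by simp
  let ?g = "R' (vs ! (i - k1))" and ?v = "vs ! (i - k1)"
    and ?P = "pochhammer [:N - of_nat k + 1, -1::real:] (k - j)"
  have g: "degree ?g = ?v" using vs_nth[of "i - k1"] False assms by simp
  have P: "degree ?P = k - j" "coeff ?P (k - j) = (-1) ^ (k - j)"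
    using degree_pochhammer_linear[of "-1::real" "N - of_nat k + 1" "k - j"] by auto
  have red: "degree (reduced_diff N (N + \<beta>) ?g j) \<le> ?v"
    "coeff (reduced_diff N (N + \<beta>) ?g j) ?v = lead_coeff ?g * ((-1) ^ j * falling_fact (real ?v - \<beta>) j)"
    using degree_reduced_diff[of ?g ?v N "N + \<beta>" j] pochhammer_minus_falling_fact[of "real ?v - \<beta>" j] g
    by simp_all
  have "top_deg i - j = (k - j) + ?v"
    using False assms by (simp add: top_deg_def)
  then have "coeff (E $$ (i,j)) (top_deg i - j) = (-1) ^ (k - j) * (-1) ^ j * lead_coeff ?g * falling_fact (real ?v - \<beta>) j"
    unfolding E_entry_V[OF i1 assms] using False coeff_mult_at_degree_bounds[of ?P "k - j", OF _ red(1)] P red(2)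
    by simp
  also have "(-1) ^ (k - j) * (-1) ^ j = (-1::real) ^ k"
    using assms by (simp add: power_add[symmetric])
  finally show ?thesis
    using False by (simp add: top_coeff_def node_def)
qed

lemma node_inj:
  assumes "i < k" "i' < k" "i \<noteq> i'"
  shows "node i \<noteq> node i'"
proof -
  have cross: "real (us ! a) \<noteq> real (vs ! (b - k1)) - \<beta>" if "a < k1" "k1 \<le> b" "b < k" for a b
    using beta us_nth[of a] vs_nth[of "b - k1"] that by force
  consider "i < k1" "i' < k1" | "k1 \<le> i" "k1 \<le> i'" | "i < k1" "k1 \<le> i'" | "k1 \<le> i" "i' < k1"
    by linarith
  then show ?thesis
  proof cases
    case 1
    then show ?thesis using assms by (simp add: node_def nth_eq_iff_index_eq)
  next
    case 2
    then have "i - k1 \<noteq> i' - k1" "i - k1 < k2" "i' - k1 < k2" using assms by auto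
    then show ?thesis using 2 by (simp add: node_def nth_eq_iff_index_eq)
  next
    case 3
    then show ?thesis using cross[of i i'] assms by (simp add: node_def)
  next
    case 4
    then show ?thesis using cross[of i' i] assms by (simp add: node_def)
  qed
qed

lemma det_top_coeffs:
  "det (mat k k (\<lambda>(i,j). coeff (E $$ (i,j)) (top_deg i - j)))
     = (\<Prod>i<k. top_coeff i) * (\<Prod>i'<k. \<Prod>i<i'. node i' - node i)"
proof -
  have "mat k k (\<lambda>(i,j). coeff (E $$ (i,j)) (top_deg i - j))
      = mat k k (\<lambda>(i,j). top_coeff i * falling_fact (node i) j)"
    by (rule eq_matI) (simp_all add: E_entry_top_coeff)
  then show ?thesis
    using det_mat_scale_rows[of k top_coeff "\<lambda>i j. falling_fact (node i) j"]
      det_falling_fact_vandermonde[OF node_inj] by simp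
qed

lemma top_coeffs_nonzero: "(\<Prod>i<k. top_coeff i) * (\<Prod>i'<k. \<Prod>i<i'. node i' - node i) \<noteq> 0"
proof -
  have "top_coeff i \<noteq> 0" if "i < k" for i
  proof (cases "i < k1")
    case True
    then show ?thesis using us_nth[of i] leading_coeff_0_iff by (metis top_coeff_def)
  next
    case False
    then have "lead_coeff (R' (vs ! (i - k1))) \<noteq> 0"
      using vs_nth[of "i - k1"] that leading_coeff_0_iff by (metis less_diff_conv2 not_less add.commute)
    then show ?thesis using False by (simp add: top_coeff_def)
  qed
  then show ?thesis using node_inj by (simp add: prod_zero_iff)
qed

lemma
  shows degree_det_A_top_deg: "degree (det A) + (\<Sum>j<k. j) = (\<Sum>i<k. top_deg i)"
    and lead_coeff_det_A_top_coeff: "lead_coeff (det A) = (\<Prod>i<k. top_coeff i) * (\<Prod>i'<k. \<Prod>i<i'. node i' - node i)"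
proof -
  have E: "E \<in> carrier_mat k k"
    unfolding E_def by (rule mult_carrier_mat[OF A_carrier fwd_diff_mat_carrier])
  have "det (mat k k (\<lambda>(i,j). coeff (E $$ (i,j)) (top_deg i - j))) \<noteq> 0"
    unfolding det_top_coeffs by (rule top_coeffs_nonzero)
  note det = degree_det_poly_mat[OF E E_entry_degree this]
  show "degree (det A) + (\<Sum>j<k. j) = (\<Sum>i<k. top_deg i)"
    using det(1) unfolding det_E .
  show "lead_coeff (det A) = (\<Prod>i<k. top_coeff i) * (\<Prod>i'<k. \<Prod>i<i'. node i' - node i)"
    using det(2) unfolding det_E det_top_coeffs .
qed

lemma sum_top_deg: "(\<Sum>i<k. top_deg i) = \<Sum>U + k2 * k + \<Sum>V"
proof -
  have "(\<Sum>i<k. top_deg i) = (\<Sum>i<k1. us ! i) + (\<Sum>i<k2. k + vs ! i)"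
    unfolding sum_lessThan_add by (simp add: top_deg_def)
  also have "\<dots> = \<Sum>U + k2 * k + \<Sum>V"
    using sum_sorted_list_of_set[OF finite_U, of id] sum_sorted_list_of_set[OF finite_V, of id]
    by (simp add: sum.distrib)
  finally show ?thesis .
qed

lemma prod_top_coeff:
  "(\<Prod>i<k. top_coeff i) = (-1) ^ (k * k2) * (\<Prod>u\<in>U. lead_coeff (R u)) * (\<Prod>v\<in>V. lead_coeff (R' v))"
proof -
  have "(\<Prod>i<k. top_coeff i)
      = (\<Prod>i<k1. lead_coeff (R (us ! i))) * (\<Prod>i<k2. (-1) ^ k * lead_coeff (R' (vs ! i)))"
    unfolding prod_lessThan_add by (simp add: top_coeff_def)
  then show ?thesis
    using prod_sorted_list_of_set[OF finite_U, of "\<lambda>u. lead_coeff (R u)"]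
      prod_sorted_list_of_set[OF finite_V, of "\<lambda>v. lead_coeff (R' v)"]
    by (simp add: prod.distrib power_mult)
qed

lemma prod_node_diffs:
  "(\<Prod>i'<k. \<Prod>i<i'. node i' - node i)
     = (-1) ^ (k1 * k2) * vandermonde U * vandermonde V * (\<Prod>u\<in>U. \<Prod>v\<in>V. \<beta> + real u - real v)"
proof -
  have "(\<Prod>i<k1. node (k1 + i') - node i) = (\<Prod>u\<in>U. real (vs ! i') - \<beta> - real u)" for i'
    using prod_sorted_list_of_set[OF finite_U, of "\<lambda>u. real (vs ! i') - \<beta> - real u"] by (simp add: node_def)
  then have "(\<Prod>i'<k2. \<Prod>i<k1. node (k1 + i') - node i) = (\<Prod>v\<in>V. \<Prod>u\<in>U. real v - \<beta> - real u)"
    using prod_sorted_list_of_set[OF finite_V, of "\<lambda>v. \<Prod>u\<in>U. real v - \<beta> - real u"] by simp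
  also have "\<dots> = (\<Prod>u\<in>U. \<Prod>v\<in>V. (-1) * (\<beta> + real u - real v))"
    by (subst prod.swap) (simp add: algebra_simps)
  also have "\<dots> = (-1) ^ (k2 * k1) * (\<Prod>u\<in>U. \<Prod>v\<in>V. \<beta> + real u - real v)"
    by (simp only: prod.distrib prod_constant power_mult)
  also have "\<dots> = (-1) ^ (k1 * k2) * (\<Prod>u\<in>U. \<Prod>v\<in>V. \<beta> + real u - real v)"
    by (simp only: mult.commute)
  finally have cross: "(\<Prod>i'<k2. \<Prod>i<k1. node (k1 + i') - node i)
      = (-1) ^ (k1 * k2) * (\<Prod>u\<in>U. \<Prod>v\<in>V. \<beta> + real u - real v)" .
  have "(\<Prod>i'<k1. \<Prod>i<i'. node i' - node i) = vandermonde U"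
    using vandermonde_sorted_list_of_set[OF finite_U] by (simp add: node_def)
  moreover have "(\<Prod>i'<k2. \<Prod>i<i'. node (k1 + i') - node (k1 + i)) = vandermonde V"
    using vandermonde_sorted_list_of_set[OF finite_V] by (simp add: node_def)
  ultimately show ?thesis
    unfolding prod_lower_pairs_add cross by (simp only: mult_ac)
qed

lemma denom_poly_dvd_det_A: "denom_poly k k2 N \<beta> dvd det A"
  unfolding denom_poly_eq
  by (rule prod_pochhammer_falling_fact_dvd_det[OF A_carrier, where G = "\<lambda>i j. R' (vs ! (i - k1)) \<circ>\<^sub>p [:of_nat j, 1:]"])
    (simp add: A_entry)

lemma degree_det_A: "degree (det A) + (k1 choose 2) + (k2 choose 2) = \<Sum>U + \<Sum>V + k2 * k2"
  using degree_det_A_top_deg sum_top_deg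
  unfolding sum_lessThan_id_eq_choose_two choose_two_add by (simp add: algebra_simps)

lemma lead_coeff_det_A:
  "lead_coeff (det A) = (-1) ^ (k2 * k2) * (vandermonde U * vandermonde V * (\<Prod>u\<in>U. lead_coeff (R u))
     * (\<Prod>v\<in>V. lead_coeff (R' v)) * (\<Prod>u\<in>U. \<Prod>v\<in>V. \<beta> + real u - real v))"
proof -
  have "k * k2 + k1 * k2 = k2 * k2 + 2 * (k1 * k2)"
    by (simp add: algebra_simps)
  then have "(-1::real) ^ (k * k2) * (-1) ^ (k1 * k2) = (-1) ^ (k2 * k2 + 2 * (k1 * k2))"
    by (metis power_add)
  also have "\<dots> = (-1) ^ (k2 * k2)"
    by (simp add: power_add power_mult)
  finally have sign: "(-1::real) ^ (k * k2) * (-1) ^ (k1 * k2) = (-1) ^ (k2 * k2)" .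
  show ?thesis
    unfolding lead_coeff_det_A_top_coeff prod_top_coeff prod_node_diffs sign[symmetric] by (simp only: mult_ac)
qed

end

theorem lemma2p2:
  fixes U V :: "nat set" and N \<beta> :: real and R R' :: "nat \<Rightarrow> real poly"
  assumes "finite U" and "finite V"
    and "\<forall>u\<in>U. u > 0" and "\<forall>v\<in>V. v > 0"
    and "\<forall>u\<in>U. R u \<noteq> 0 \<and> degree (R u) = u"
    and "\<forall>v\<in>V. R' v \<noteq> 0 \<and> degree (R' v) = v"
    and "\<forall>u\<in>U. \<forall>v\<in>V. \<beta> + real u - real v \<noteq> 0"
  shows "\<exists>p :: real poly.
     (\<forall>x. denom (card U + card V) (card V) N \<beta> x \<noteq> 0 \<longrightarrow> P_fun U V N \<beta> R R' x = poly p x)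
     \<and> int (degree p) = int (\<Sum>U) + int (\<Sum>V) - int (card U choose 2) - int (card V choose 2)
     \<and> lead_coeff p = vandermonde U * vandermonde V * (\<Prod>u\<in>U. lead_coeff (R u))
          * (\<Prod>v\<in>V. lead_coeff (R' v)) * (\<Prod>u\<in>U. \<Prod>v\<in>V. \<beta> + real u - real v)"
proof -
  interpret M_setting U V N \<beta> R R'
    using assms by unfold_locales
  let ?D = "denom_poly (card U + card V) (card V) N \<beta>"
  obtain p where p: "det A = ?D * p"
    using denom_poly_dvd_det_A by (elim dvdE)
  have D: "?D \<noteq> 0" "degree ?D = card V * card V" "lead_coeff ?D = (-1) ^ (card V * card V)"
    using degree_denom_poly[of "card U + card V" "card V" N \<beta>] by auto
  have "det A \<noteq> 0"
    using lead_coeff_det_A_top_coeff top_coeffs_nonzero by auto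
  then have "p \<noteq> 0" using p by auto
  then have "degree p + (card U choose 2) + (card V choose 2) = \<Sum>U + \<Sum>V"
    using degree_det_A D by (simp add: p degree_mult_eq)
  then have "int (degree p) = int (\<Sum>U) + int (\<Sum>V) - int (card U choose 2) - int (card V choose 2)"
    by linarith
  moreover have "lead_coeff p = vandermonde U * vandermonde V * (\<Prod>u\<in>U. lead_coeff (R u))
      * (\<Prod>v\<in>V. lead_coeff (R' v)) * (\<Prod>u\<in>U. \<Prod>v\<in>V. \<beta> + real u - real v)"
    using lead_coeff_det_A D by (simp add: p lead_coeff_mult)
  moreover have "P_fun U V N \<beta> R R' x = poly p x" if "denom (card U + card V) (card V) N \<beta> x \<noteq> 0" for x
    using that unfolding P_fun_def M_mat_eq_map_mat poly_det_map_mat[symmetric] A_def[symmetric] p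
    by (simp add: poly_denom_poly)
  ultimately show ?thesis
    by blast
qed

end
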